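(* Let $d,n\ge 1$, $\lambda>0$, $0<\kappa\le 1$, and let $u\in H^{2}_{\mathrm{mix}}$ on $[0,1]^d$ satisfy the standing facts below. Let $I_n:=\{i\in\mathbb{N}^d:\|i\|_1\le n\}$ and let $u_i$ ($i\in I_n$) be the piecewise $d$-linear interpolant of $u$ on the grid $\Omega_i$. Let $t_n\ge 0$ and for each $i$ with $\|i\|_1=n$ let $t_i\in[0,t_n]$. Let $(U_i)_{i\in I_n}$ be $\{0,1\}$-valued random variables with $U_i=0$ almost surely if $\|i\|_1<n$ and $\Pr(U_i=1)=G(t_i)$ if $\|i\|_1=n$, where $G(t)=\frac{1}{\lambda\Gamma(1+1/\kappa)}\int_0^t e^{-(x/\lambda)^\kappa}dx$. Let $I'=\{i\in I_n: U_i=0\}$ (a random set) and let $u^{\mathrm{gcp}}_{I'}=\sum_{i\in I'}c_iu_i$, where $(c_i)_{i\in I'}$ is the (unique) solution of the general coefficient problem for $I'$. Then $$\mathbb{E}\left[\|u-u^{\mathrm{gcp}}_{I'}\|_{2}\right]\le \epsilon_n\left(1+3\left(1-e^{-(t_n/\lambda)^{\kappa}}\right)\right).$$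
   Context: Notation: for $i\in\mathbb{N}$, $\Omega_i=\{k2^{-i}:k=0,\dots,2^i\}$; for $i\in\mathbb{N}^d$, $\Omega_i=\Omega_{i_1}\times\cdots\times\Omega_{i_d}\subset[0,1]^d$. For multi-indices, $i\le j$ means $i_k\le j_k$ for all $k$, $\|i\|_1=\sum_k i_k$, and $I{\downarrow}:=\{i:\exists j\in I,\ i\le j\}$. $\|\cdot\|_2$ is the $L^2([0,1]^d)$ norm. Hierarchical surpluses: for $j\in\mathbb{N}^d$, $h_j:=\sum_{S\subseteq\{1,\dots,d\}}(-1)^{|S|}u_{j-e_S}$, where $e_S=\sum_{k\in S}e^k$ ($e^k$ the $k$-th unit multi-index) and $u_m:=0$ if some $m_k<0$; so $u_i=\sum_{j\le i}h_j$. Seminorm: $|u|_{H^2_{\mathrm{mix}}}:=\left\|\frac{\partial^{2d}u}{\partial x_1^2\cdots\partial x_d^2}\right\|_2$. Standing facts (taken as given for $u\in H^2_{\mathrm{mix}}$): $u=\sum_{j\in\mathbb{N}^d}h_j$ with convergence in $L^2$, and $\|h_j\|_2\le 3^{-d}4^{-\|j\|_1}|u|_{H^2_{\mathrm{mix}}}$ for all $j$. Define $$\epsilon_n:=\tfrac13\,3^{-d}\,2^{-2n}\,|u|_{H^2_{\mathrm{mix}}}\sum_{k=0}^{d-1}\binom{n+d}{k}\left(\tfrac13\right)^{d-1-k},$$ which equals $3^{-d}|u|_{H^2_{\mathrm{mix}}}\sum_{k=n+1}^{\infty}4^{-k}\binom{k+d-1}{d-1}$. General coefficient problem (GCP) for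 a finite $I\subset\mathbb{N}^d$: for real $(c_i)_{i\in I}$ set $w_i:=\sum_{j\in I,\,j\ge i}c_j$ for $i\in I{\downarrow}$; among all families with $w_i\in\{0,1\}$ for all $i\in I{\downarrow}$, maximise $Q'(w)=\sum_{i\in I{\downarrow}}4^{-\|i\|_1}w_i$. (Here $I'$ is always a downset, for which the GCP solution is unique with $w_i=1$ on $I'$.) $G$ is the random-incidence distribution function of a Weibull renewal process with scale $\lambda$ and shape $\kappa$, modelling the probability that the computation of $u_i$ (taking time $t_i$ on one node) is interrupted by a fault; solutions with $\|i\|_1<n$ are recomputed on failure and hence always available. *)

theory Defs
  imports "HOL-Probability.Probability"
begin

text \<open>Multi-indices in N^d are functions 'd => nat with 'd a finite type, d = CARD('d).
  The order on multi-indices is the pointwise order on functions.\<close>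

definition norm1 :: "('d::finite \<Rightarrow> nat) \<Rightarrow> nat" where
  "norm1 i = (\<Sum>k\<in>UNIV. i k)"

definition downset :: "('d::finite \<Rightarrow> nat) set \<Rightarrow> ('d \<Rightarrow> nat) set" where
  "downset I = {i. \<exists>j\<in>I. i \<le> j}"

text \<open>Hierarchical surplus h_j = sum over S of (-1)^|S| u_(j - e_S), with u_m = 0 when
  some component of m is negative (so only S inside the support of j contribute).\<close>
definition surplus :: "(('d::finite \<Rightarrow> nat) \<Rightarrow> 'v::real_vector) \<Rightarrow> ('d \<Rightarrow> nat) \<Rightarrow> 'v" where
  "surplus uu j = (\<Sum>S\<in>{S. S \<subseteq> {k. 0 < j k}}.
      ((-1::real) ^ card S) *\<^sub>R uu (\<lambda>k. if k \<in> S then j k - 1 else j k))"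

definition gcp_w :: "('d::finite \<Rightarrow> nat) set \<Rightarrow> (('d \<Rightarrow> nat) \<Rightarrow> real) \<Rightarrow> ('d \<Rightarrow> nat) \<Rightarrow> real" where
  "gcp_w I c i = (\<Sum>j\<in>{j\<in>I. i \<le> j}. c j)"

definition gcp_Q :: "('d::finite \<Rightarrow> nat) set \<Rightarrow> (('d \<Rightarrow> nat) \<Rightarrow> real) \<Rightarrow> real" where
  "gcp_Q I c = (\<Sum>i\<in>downset I. (1/4::real) ^ norm1 i * gcp_w I c i)"

definition gcp_feasible :: "('d::finite \<Rightarrow> nat) set \<Rightarrow> (('d \<Rightarrow> nat) \<Rightarrow> real) \<Rightarrow> bool" where
  "gcp_feasible I c \<longleftrightarrow> (\<forall>j. j \<notin> I \<longrightarrow> c j = 0) \<and> (\<forall>i\<in>downset I. gcp_w I c i \<in> {0, 1})"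

definition gcp_solution :: "('d::finite \<Rightarrow> nat) set \<Rightarrow> (('d \<Rightarrow> nat) \<Rightarrow> real) \<Rightarrow> bool" where
  "gcp_solution I c \<longleftrightarrow> gcp_feasible I c \<and> (\<forall>c'. gcp_feasible I c' \<longrightarrow> gcp_Q I c' \<le> gcp_Q I c)"

definition gcp_coeffs :: "('d::finite \<Rightarrow> nat) set \<Rightarrow> ('d \<Rightarrow> nat) \<Rightarrow> real" where
  "gcp_coeffs I = (SOME c. gcp_solution I c)"

definition u_gcp :: "(('d::finite \<Rightarrow> nat) \<Rightarrow> 'v::real_vector) \<Rightarrow> ('d \<Rightarrow> nat) set \<Rightarrow> 'v" where
  "u_gcp uu I = (\<Sum>i\<in>I. gcp_coeffs I i *\<^sub>R uu i)"

text \<open>Random-incidence distribution function of a Weibull renewal process.\<close>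
definition weibull_G :: "real \<Rightarrow> real \<Rightarrow> real \<Rightarrow> real" where
  "weibull_G lam kap t = 1 / (lam * Gamma (1 + 1/kap)) * integral {0..t} (\<lambda>x. exp (- ((x/lam) powr kap)))"

definition eps_n :: "nat \<Rightarrow> nat \<Rightarrow> real \<Rightarrow> real" where
  "eps_n d n s = 1/3 * (1/3)^d * (1/2)^(2*n) * s *
     (\<Sum>k=0..d-1. real ((n+d) choose k) * (1/3)^(d-1-k))"

end

theory Submission
  imports Defs "HOL-Library.Multiset"
begin

text \<open>
  Faults only remove indices of the top level, so the surviving index set I' satisfies
  I_(n-1) \<subseteq> I' \<subseteq> I_n and is a downset. On a downset the GCP solution has all w_i = 1,
  and Moebius inversion of u_i = sum of h_j over j \<le> i turns u_gcp into the sum of the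
  surpluses over I'. The error is therefore the sum of the surpluses outside I': those of
  level > n contribute at most eps_n, and each lost top-level index at most 3^-d 4^-n s.
  The expected number of lost indices is the sum of G(t_i) \<le> |I_n - I_(n-1)| (1 - S(t_n)),
  where S(x) = exp (-(x/lam)^kap) is the Weibull survival function: since kap \<le> 1, S is
  supermultiplicative, which gives G(t) \<le> 1 - S(t). Finally 4^-n |I_n - I_(n-1)| is at
  most three times the tail sum behind eps_n.
\<close>

section \<open>Multi-indices\<close>

lemma finite_fun_le: "finite {j::'d::finite \<Rightarrow> nat. j \<le> i}"
proof -
  have "{j::'d \<Rightarrow> nat. j \<le> i} = PiE UNIV (\<lambda>k. {..i k})"
    by (auto simp: le_fun_def PiE_def Pi_def extensional_def)
  then show ?thesis
    by (simp add: finite_PiE)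
qed

lemma component_le_norm1: "i k \<le> norm1 i"
  unfolding norm1_def by (rule member_le_sum) auto

lemma finite_norm1_le: "finite {i::'d::finite \<Rightarrow> nat. norm1 i \<le> K}"
  by (rule finite_subset[OF _ finite_fun_le[of "\<lambda>_. K"]])
     (auto simp: le_fun_def intro: order.trans[OF component_le_norm1])

lemma finite_norm1_eq: "finite {i::'d::finite \<Rightarrow> nat. norm1 i = k}"
  by (rule finite_subset[OF _ finite_norm1_le[of k]]) auto

lemma norm1_strict_mono:
  assumes "(j::'d::finite \<Rightarrow> nat) < i"
  shows "norm1 j < norm1 i"
proof -
  obtain k where "j k < i k"
    using assms by (auto simp: less_fun_def le_fun_def not_le)
  then show ?thesis
    unfolding norm1_def using assms
    by (intro sum_strict_mono_ex1) (auto simp: less_fun_def le_fun_def)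
qed

lemma card_norm1_eq: "card {i::'d::finite \<Rightarrow> nat. norm1 i = k} = (CARD('d) + k - 1) choose k"
proof -
  have size_eq: "norm1 (count X) = size X" for X :: "'d multiset"
  proof -
    have "size X = sum (count X) (set_mset X)"
      by (simp add: size_multiset_overloaded_eq)
    also have "\<dots> = sum (count X) UNIV"
      by (rule sum.mono_neutral_left) (auto simp: not_in_iff)
    finally show ?thesis
      by (simp add: norm1_def)
  qed
  have "bij_betw count (multisets_of_size (UNIV::'d set) k) {i. norm1 i = k}"
  proof (rule bij_betw_byWitness[where f' = Abs_multiset])
    show "count ` multisets_of_size (UNIV::'d set) k \<subseteq> {i. norm1 i = k}"
      by (auto simp: multisets_of_size_def size_eq)
    show "Abs_multiset ` {i::'d \<Rightarrow> nat. norm1 i = k} \<subseteq> multisets_of_size UNIV k"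
      by (auto simp: multisets_of_size_def simp flip: size_eq)
  qed auto
  then have "card {i::'d \<Rightarrow> nat. norm1 i = k} = card (multisets_of_size (UNIV::'d set) k)"
    by (simp add: bij_betw_same_card)
  also have "\<dots> = (CARD('d) + k - 1) choose k"
    by (rule card_multisets_of_size) simp
  finally show ?thesis .
qed

section \<open>The binomial tail\<close>

text \<open>Closed form of the sum over k > n of 4^-k (k+d-1 choose d-1).\<close>
definition binomial_tail :: "nat \<Rightarrow> nat \<Rightarrow> real" where
  "binomial_tail d n = 1/3 * (1/4)^n * (\<Sum>m=0..d-1. real ((n+d) choose m) * (1/3)^(d-1-m))"

lemma eps_n_eq_binomial_tail: "eps_n d n s = (1/3)^d * s * binomial_tail d n"
proof -
  have "(1/2::real)^(2*n) = (1/4)^n"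
    by (simp add: power_mult power2_eq_square)
  then show ?thesis
    by (simp add: eps_n_def binomial_tail_def mult_ac)
qed

lemma binomial_tail_nonneg: "0 \<le> binomial_tail d n"
  by (simp add: binomial_tail_def sum_nonneg)

lemma sum_choose_pow3_recurrence:
  "4 * (\<Sum>m\<le>e. real (N choose m) * 3^m) - (\<Sum>m\<le>e. real (Suc N choose m) * 3^m)
     = 3^Suc e * real (N choose e)"
proof (induction e)
  case (Suc e)
  have "real (Suc N choose Suc e) = real (N choose e) + real (N choose Suc e)"
    by simp
  with Suc.IH show ?case
    by (simp add: algebra_simps)
qed simp

lemma binomial_tail_Suc:
  "binomial_tail (Suc e) k = 1/3 * (1/4)^k * (1/3)^e * (\<Sum>m\<le>e. real ((k + Suc e) choose m) * 3^m)"
proof -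
  have "(1/3::real)^(e-m) = (1/3)^e * 3^m" if "m \<le> e" for m
    using that by (simp add: power_diff field_simps)
  then show ?thesis
    by (simp add: binomial_tail_def sum_distrib_left atLeast0AtMost mult_ac)
qed

lemma binomial_tail_diff:
  assumes "d \<ge> 1"
  shows "binomial_tail d k - binomial_tail d (Suc k) = (1/4)^Suc k * real ((k+d) choose (d-1))"
proof -
  obtain e where d: "d = Suc e"
    using assms by (cases d) auto
  have "binomial_tail d k - binomial_tail d (Suc k)
      = 1/3 * (1/4)^Suc k * (1/3)^e *
        (4 * (\<Sum>m\<le>e. real ((k+d) choose m) * 3^m) - (\<Sum>m\<le>e. real (Suc (k+d) choose m) * 3^m))"
    by (simp add: binomial_tail_Suc d algebra_simps)
  also have "\<dots> = (1/4)^Suc k * real ((k+d) choose e)"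
    by (simp only: sum_choose_pow3_recurrence) (simp add: field_simps)
  finally show ?thesis
    by (simp add: d)
qed

lemma sum_levels_eq_binomial_tail_diff:
  assumes "d \<ge> 1"
  shows "(\<Sum>k\<in>{n<..n+m}. (1/4)^k * real ((d + k - 1) choose k))
           = binomial_tail d n - binomial_tail d (n+m)"
proof (induction m)
  case (Suc m)
  have "{n<..n + Suc m} = insert (Suc (n+m)) {n<..n+m}"
    by auto
  moreover have "(d + Suc (n+m) - 1) choose Suc (n+m) = (n+m+d) choose (d-1)"
    using assms binomial_symmetric[of "Suc (n+m)" "n+m+d"] by (simp add: ac_simps)
  ultimately show ?case
    using Suc.IH binomial_tail_diff[OF assms, of "n+m"] by simp
qed simp

lemma sum_norm1_gt_le_binomial_tail:
  fixes F :: "('d::finite \<Rightarrow> nat) set"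
  assumes "finite F" "\<And>j. j \<in> F \<Longrightarrow> n < norm1 j"
  shows "(\<Sum>j\<in>F. (1/4::real)^norm1 j) \<le> binomial_tail CARD('d) n"
proof -
  define K where "K = n + Max (insert 0 (norm1 ` F))"
  define A where "A = {j::'d \<Rightarrow> nat. n < norm1 j \<and> norm1 j \<le> K}"
  have "finite A"
    unfolding A_def by (rule finite_subset[OF _ finite_norm1_le[of K]]) auto
  moreover have "F \<subseteq> A"
    using assms by (auto simp: A_def K_def intro!: trans_le_add2 Max_ge)
  ultimately have "(\<Sum>j\<in>F. (1/4::real)^norm1 j) \<le> (\<Sum>j\<in>A. (1/4)^norm1 j)"
    by (intro sum_mono2) auto
  also have "\<dots> = (\<Sum>k\<in>{n<..K}. \<Sum>j\<in>{j\<in>A. norm1 j = k}. (1/4)^norm1 j)"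
    by (rule sum.group[symmetric]) (use \<open>finite A\<close> in \<open>auto simp: A_def\<close>)
  also have "\<dots> = (\<Sum>k\<in>{n<..K}. (1/4)^k * real ((CARD('d) + k - 1) choose k))"
  proof (rule sum.cong[OF refl])
    fix k assume "k \<in> {n<..K}"
    then have "{j\<in>A. norm1 j = k} = {j. norm1 j = k}"
      by (auto simp: A_def)
    then show "(\<Sum>j\<in>{j\<in>A. norm1 j = k}. (1/4)^norm1 j) = (1/4::real)^k * real ((CARD('d) + k - 1) choose k)"
      by (simp add: card_norm1_eq)
  qed
  also have "\<dots> = binomial_tail CARD('d) n - binomial_tail CARD('d) K"
    using sum_levels_eq_binomial_tail_diff[of "CARD('d)" n "K - n"] by (simp add: K_def)
  also have "\<dots> \<le> binomial_tail CARD('d) n"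
    by (simp add: binomial_tail_nonneg)
  finally show ?thesis .
qed

lemma card_level_le_binomial_tail:
  "(1/4)^n * card {i::'d::finite \<Rightarrow> nat. norm1 i = n} \<le> 3 * binomial_tail CARD('d) n"
proof -
  obtain e where d: "CARD('d) = Suc e"
    using finite_UNIV_card_ge_0[where 'a = 'd] by (cases "CARD('d)") auto
  have "card {i::'d \<Rightarrow> nat. norm1 i = n} = (n + e) choose e"
    using binomial_symmetric[of n "n + e"] by (simp add: card_norm1_eq d ac_simps)
  also have "\<dots> \<le> (n + Suc e) choose e"
    by (intro binomial_right_mono) simp
  finally have "real (card {i::'d \<Rightarrow> nat. norm1 i = n}) \<le> real ((n + Suc e) choose e) * (1/3)^(e - e)"
    by simp
  also have "\<dots> \<le> (\<Sum>m=0..e. real ((n + Suc e) choose m) * (1/3)^(e - m))"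
    by (rule member_le_sum[where f = "\<lambda>m. real ((n + Suc e) choose m) * (1/3)^(e - m)"]) auto
  finally show ?thesis
    by (simp add: binomial_tail_def d)
qed

section \<open>Hierarchical surpluses and the general coefficient problem\<close>

lemma sum_subsets_minus_one_pow_card:
  assumes "finite A"
  shows "(\<Sum>S\<in>{S. S \<subseteq> A}. (-1::real)^card S) = (if A = {} then 1 else 0)"
proof -
  have "(\<Sum>S\<in>{S. S \<subseteq> A}. (-1::real)^card S) = (\<Prod>x\<in>A. (1::real) - 1)"
    using prod_diff_conv_sum[OF assms, of "\<lambda>_. 1::real" "\<lambda>_. 1"] by (simp add: Pow_def)
  also have "\<dots> = (if A = {} then 1 else 0)"
    using assms by (simp add: card_gt_0_iff)
  finally show ?thesis .
qed

lemma sum_surplus_le: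
  fixes uu :: "('d::finite \<Rightarrow> nat) \<Rightarrow> 'v::real_vector"
  shows "(\<Sum>j\<in>{j. j \<le> i}. surplus uu j) = uu i"
proof -
  let ?sub = "\<lambda>j S. (\<lambda>k. if k \<in> S then j k - 1 else j k) :: 'd \<Rightarrow> nat"
  let ?add = "\<lambda>m S. (\<lambda>k. if k \<in> S then m k + 1 else m k) :: 'd \<Rightarrow> nat"
  let ?P = "SIGMA j:{j. j \<le> i}. {S. S \<subseteq> {k. 0 < j k}}"
  let ?Q = "SIGMA m:{m. m \<le> i}. {S. S \<subseteq> {k. m k < i k}}"
  have "(\<Sum>j\<in>{j. j \<le> i}. surplus uu j) = (\<Sum>(j,S)\<in>?P. ((-1::real)^card S) *\<^sub>R uu (?sub j S))"
    unfolding surplus_def by (subst sum.Sigma) (auto simp: finite_fun_le)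
  also have "\<dots> = (\<Sum>(m,S)\<in>?Q. ((-1::real)^card S) *\<^sub>R uu m)"
    \<comment> \<open>substitute m = j - e_S\<close>
    by (rule sum.reindex_bij_witness[where i = "\<lambda>(m,S). (?add m S, S)" and j = "\<lambda>(j,S). (?sub j S, S)"])
       (auto simp: le_fun_def fun_eq_iff subset_iff Suc_le_eq,
        (meson diff_le_self le_trans diff_Suc_less less_le_trans)+)
  also have "\<dots> = (\<Sum>m\<in>{m. m \<le> i}. (\<Sum>S\<in>{S. S \<subseteq> {k. m k < i k}}. (-1::real)^card S) *\<^sub>R uu m)"
    by (subst sum.Sigma[symmetric]) (auto simp: finite_fun_le scaleR_sum_left)
  also have "\<dots> = (\<Sum>m\<in>{m. m \<le> i}. if m = i then uu m else 0)"
  proof (rule sum.cong[OF refl])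
    fix m assume "m \<in> {m. m \<le> i}"
    then have "{k. m k < i k} = {} \<longleftrightarrow> m = i"
      by (auto simp: le_fun_def fun_eq_iff order.order_iff_strict)
    then show "(\<Sum>S\<in>{S. S \<subseteq> {k. m k < i k}}. (-1::real)^card S) *\<^sub>R uu m = (if m = i then uu m else 0)"
      by (simp add: sum_subsets_minus_one_pow_card)
  qed
  also have "\<dots> = uu i"
    by (simp add: finite_fun_le)
  finally show ?thesis .
qed

lemma gcp_w_solvable:
  fixes I :: "('d::finite \<Rightarrow> nat) set"
  assumes "finite I"
  shows "\<exists>c. (\<forall>j. j \<notin> I \<longrightarrow> c j = 0) \<and> (\<forall>i\<in>I. gcp_w I c i = v i)"
  using assms
  \<comment> \<open>the system is triangular: add indices in order of decreasing norm1\<close>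
proof (induction I rule: finite_ranking_induct[where f = "\<lambda>i. - int (norm1 i)"])
  case (insert x S)
  show ?case
  proof (cases "x \<in> S")
    case True
    then show ?thesis
      using insert by (simp add: insert_absorb)
  next
    case False
    obtain c0 where c0: "\<forall>j. j \<notin> S \<longrightarrow> c0 j = 0" "\<forall>i\<in>S. gcp_w S c0 i = v i"
      using insert.IH by blast
    define c where "c = c0(x := v x - (\<Sum>j\<in>{j\<in>S. x \<le> j}. c0 j))"
    have not_le_x: "\<not> i \<le> x" if "i \<in> S" for i
      using insert.hyps(2)[OF that] False that norm1_strict_mono[of i x]
      by (auto simp: order.order_iff_strict)
    have sum_c: "(\<Sum>j\<in>{j\<in>S. i \<le> j}. c j) = (\<Sum>j\<in>{j\<in>S. i \<le> j}. c0 j)" for i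
      using False by (intro sum.cong) (auto simp: c_def)
    have "gcp_w (insert x S) c i = v i" if "i \<in> insert x S" for i
    proof (cases "i = x")
      case True
      have "{j \<in> insert x S. x \<le> j} = insert x {j\<in>S. x \<le> j}"
        by auto
      then show ?thesis
        using True False insert.hyps(1) sum_c[of x] by (simp add: gcp_w_def c_def)
    next
      case i_ne_x: False
      with that have "{j \<in> insert x S. i \<le> j} = {j\<in>S. i \<le> j}"
        using not_le_x by auto
      then show ?thesis
        using c0(2) i_ne_x that sum_c[of i] by (simp add: gcp_w_def)
    qed
    moreover have "\<forall>j. j \<notin> insert x S \<longrightarrow> c j = 0"
      using c0(1) by (simp add: c_def)
    ultimately show ?thesis
      by blast
  qed
qed (auto intro: exI[of _ "\<lambda>_. 0"])

lemma gcp_w_gcp_coeffs_downset: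
  fixes I :: "('d::finite \<Rightarrow> nat) set"
  assumes "finite I" "downset I = I" "i \<in> I"
  shows "gcp_w I (gcp_coeffs I) i = 1"
proof -
  obtain c1 where c1: "\<forall>j. j \<notin> I \<longrightarrow> c1 j = 0" "\<forall>i\<in>I. gcp_w I c1 i = 1"
    using gcp_w_solvable[OF assms(1), of "\<lambda>_. 1"] by blast
  have "gcp_Q I c \<le> gcp_Q I c1" if "gcp_feasible I c" for c
    using that c1 by (auto simp: gcp_Q_def gcp_feasible_def assms(2) intro!: sum_mono)
  moreover have "gcp_feasible I c1"
    using c1 by (simp add: gcp_feasible_def assms(2))
  ultimately have "gcp_solution I c1"
    by (simp add: gcp_solution_def)
  then have sol: "gcp_solution I (gcp_coeffs I)"
    unfolding gcp_coeffs_def by (rule someI[where P = "gcp_solution I"])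
  show ?thesis
  proof (rule ccontr)
    let ?c = "gcp_coeffs I"
    assume "gcp_w I ?c i \<noteq> 1"
    moreover have "\<forall>i\<in>I. gcp_w I ?c i \<in> {0,1}"
      using sol by (simp add: gcp_solution_def gcp_feasible_def assms(2))
    ultimately have "gcp_Q I ?c < gcp_Q I c1"
      using c1(2) assms(3) unfolding gcp_Q_def assms(2)
      by (intro sum_strict_mono_ex1[OF assms(1)]) (auto intro!: bexI[of _ i])
    moreover have "gcp_Q I c1 \<le> gcp_Q I ?c"
      using sol \<open>gcp_feasible I c1\<close> by (simp add: gcp_solution_def)
    ultimately show False
      by simp
  qed
qed

lemma u_gcp_downset:
  fixes I :: "('d::finite \<Rightarrow> nat) set" and uu :: "('d \<Rightarrow> nat) \<Rightarrow> 'v::real_vector"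
  assumes "finite I" "downset I = I"
  shows "u_gcp uu I = (\<Sum>j\<in>I. surplus uu j)"
proof -
  let ?c = "gcp_coeffs I"
  have below: "{j\<in>I. j \<le> i} = {j. j \<le> i}" if "i \<in> I" for i
    using that assms(2) by (auto simp: downset_def)
  have "u_gcp uu I = (\<Sum>i\<in>I. ?c i *\<^sub>R (\<Sum>j\<in>{j\<in>I. j \<le> i}. surplus uu j))"
    unfolding u_gcp_def by (intro sum.cong) (simp_all add: below sum_surplus_le)
  also have "\<dots> = (\<Sum>i\<in>I. \<Sum>j\<in>{j\<in>I. j \<le> i}. ?c i *\<^sub>R surplus uu j)"
    by (simp add: scaleR_sum_right)
  also have "\<dots> = (\<Sum>j\<in>I. \<Sum>i\<in>{i\<in>I. j \<le> i}. ?c i *\<^sub>R surplus uu j)"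
    by (rule sum.swap_restrict[OF assms(1) assms(1)])
  also have "\<dots> = (\<Sum>j\<in>I. gcp_w I ?c j *\<^sub>R surplus uu j)"
    by (simp add: gcp_w_def scaleR_sum_left)
  also have "\<dots> = (\<Sum>j\<in>I. surplus uu j)"
    using gcp_w_gcp_coeffs_downset[OF assms] by simp
  finally show ?thesis .
qed

section \<open>The Weibull random-incidence distribution\<close>

lemma powr_add_le_add_powr:
  fixes a b k :: real
  assumes "0 \<le> a" "0 \<le> b" "0 < k" "k \<le> 1"
  shows "(a + b) powr k \<le> a powr k + b powr k"
proof (cases "a + b = 0")
  case False
  then have ab: "a + b > 0"
    using assms by simp
  have "a/(a+b) + b/(a+b) = 1"
    using ab by (simp add: add_divide_distrib[symmetric])
  moreover have "x \<le> x powr k" if "0 \<le> x" "x \<le> 1" for x :: real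
    using that assms powr_mono'[of k 1 x] by simp
  ultimately have "1 \<le> (a/(a+b)) powr k + (b/(a+b)) powr k"
    using ab assms by (smt (verit) divide_le_eq_1 divide_nonneg_pos)
  then have "(a+b) powr k \<le> (a+b) powr k * ((a/(a+b)) powr k + (b/(a+b)) powr k)"
    by (simp add: mult_le_cancel_left1)
  also have "\<dots> = a powr k + b powr k"
    using ab assms by (simp add: distrib_left powr_divide)
  finally show ?thesis .
qed (use assms in simp)

definition weibull_survival :: "real \<Rightarrow> real \<Rightarrow> real \<Rightarrow> real" where
  "weibull_survival lam kap x = exp (- ((x/lam) powr kap))"

lemma weibull_survival_pos: "0 < weibull_survival lam kap x"
  by (simp add: weibull_survival_def)

lemma weibull_survival_le_1: "lam > 0 \<Longrightarrow> x \<ge> 0 \<Longrightarrow> weibull_survival lam kap x \<le> 1"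
  by (simp add: weibull_survival_def)

lemma weibull_survival_mult_le:
  assumes "lam > 0" "0 < kap" "kap \<le> 1" "x \<ge> 0" "y \<ge> 0"
  shows "weibull_survival lam kap x * weibull_survival lam kap y \<le> weibull_survival lam kap (x + y)"
  using powr_add_le_add_powr[of "x/lam" "y/lam" kap] assms
  by (simp add: weibull_survival_def add_divide_distrib flip: exp_add)

lemma continuous_on_weibull_survival:
  "lam > 0 \<Longrightarrow> kap > 0 \<Longrightarrow> A \<subseteq> {0..} \<Longrightarrow> continuous_on A (weibull_survival lam kap)"
  unfolding weibull_survival_def by (intro continuous_intros continuous_on_powr') auto

lemma weibull_survival_integrable:
  "lam > 0 \<Longrightarrow> kap > 0 \<Longrightarrow> 0 \<le> a \<Longrightarrow> weibull_survival lam kap integrable_on {a..b}"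
  by (intro integrable_continuous_interval continuous_on_weibull_survival) auto

lemma Gamma_one_plus_inverse_pos: "(kap::real) > 0 \<Longrightarrow> 0 < Gamma (1 + 1/kap)"
  by (intro Gamma_real_pos) (simp add: add_pos_pos)

text \<open>The substitution u = (x/lam) powr kap is singular at x = 0 when kap < 1, hence a > 0.\<close>
lemma integral_weibull_survival_le_away_from_0:
  assumes lam: "lam > 0" and kap: "0 < kap" "kap \<le> 1" and a: "0 < a" "a \<le> R"
  shows "integral {a..R} (weibull_survival lam kap) \<le> lam * Gamma (1 + 1/kap)"
proof -
  define g where "g x = (x/lam) powr kap" for x
  define g' where "g' x = kap/lam * (x/lam) powr (kap - 1)" for x
  define f where "f u = u powr (1/kap - 1) / exp u" for u :: real
  have ga: "g a > 0"
    using a lam by (simp add: g_def)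
  have g_mono: "g x \<le> g y" if "0 \<le> x" "x \<le> y" for x y
    using that lam kap by (simp add: g_def powr_mono2 divide_right_mono)
  have "((\<lambda>x. g' x *\<^sub>R f (g x)) has_integral (integral {g a..g R} f)) {a..R}"
  proof (rule has_integral_substitution)
    show "continuous_on {g a..g R} f"
      unfolding f_def using ga by (intro continuous_intros) auto
    fix x assume "x \<in> {a..R}"
    with a have x: "x > 0"
      by simp
    show "(g has_field_derivative g' x) (at x within {a..R})"
      unfolding g_def g'_def by (rule derivative_eq_intros refl | use x lam in simp)+
  qed (use a g_mono in auto)
  moreover have "g' x *\<^sub>R f (g x) = kap/lam * weibull_survival lam kap x" if "x \<in> {a..R}" for x
  proof -
    have x: "x/lam > 0"
      using that a lam by simp
    have "kap * (1/kap - 1) = 1 - kap"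
      using kap by (simp add: field_simps)
    then have "((x/lam) powr kap) powr (1/kap - 1) = (x/lam) powr (1 - kap)"
      by (simp add: powr_powr)
    moreover have "(x/lam) powr (kap - 1) * (x/lam) powr (1 - kap) = 1"
      using that a lam by (simp flip: powr_add)
    ultimately show ?thesis
      by (simp add: g_def g'_def f_def weibull_survival_def exp_minus field_simps)
  qed
  ultimately have "((\<lambda>x. kap/lam * weibull_survival lam kap x) has_integral integral {g a..g R} f) {a..R}"
    by (rule has_integral_eq[rotated]) auto
  then have "kap/lam * integral {a..R} (weibull_survival lam kap) = integral {g a..g R} f"
    using weibull_survival_integrable[OF lam kap(1), of a R] a
    by (metis integral_mult_right integral_unique)
  also have "\<dots> \<le> integral {0..} f"
  proof (rule integral_subset_le)
    show "f integrable_on {g a..g R}"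
      unfolding f_def using ga by (intro integrable_continuous_interval continuous_intros) auto
    show "f integrable_on {0..}"
      unfolding f_def using Gamma_integral_real[of "1/kap"] kap by (auto simp: integrable_on_def)
  qed (use ga in \<open>auto simp: f_def\<close>)
  also have "\<dots> = Gamma (1/kap)"
    unfolding f_def using Gamma_integral_real[of "1/kap"] kap by (simp add: integral_unique)
  also have "\<dots> = kap * Gamma (1 + 1/kap)"
  proof -
    have "1/kap \<notin> \<int>\<^sub>\<le>\<^sub>0"
      using kap by (auto dest: nonpos_Ints_nonpos)
    then show ?thesis
      using Gamma_plus1[of "1/kap"] kap by (simp add: add.commute)
  qed
  finally show ?thesis
    using lam kap by (simp add: field_simps)
qed

lemma integral_weibull_survival_le:
  assumes lam: "lam > 0" and kap: "0 < kap" "kap \<le> 1" and R: "R \<ge> 0"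
  shows "integral {0..R} (weibull_survival lam kap) \<le> lam * Gamma (1 + 1/kap)"
proof (rule field_le_epsilon)
  fix e :: real assume "e > 0"
  show "integral {0..R} (weibull_survival lam kap) \<le> lam * Gamma (1 + 1/kap) + e"
  proof (cases "R = 0")
    case True
    then show ?thesis
      using \<open>e > 0\<close> lam kap Gamma_one_plus_inverse_pos[of kap] by simp
  next
    case False
    define a where "a = min e R"
    have a: "0 < a" "a \<le> R" "a \<le> e"
      using False R \<open>e > 0\<close> by (auto simp: a_def)
    have "integral {0..R} (weibull_survival lam kap)
        = integral {0..a} (weibull_survival lam kap) + integral {a..R} (weibull_survival lam kap)"
      using a weibull_survival_integrable[OF lam kap(1), of 0 R]
      by (simp add: Henstock_Kurzweil_Integration.integral_combine)
    also have "integral {0..a} (weibull_survival lam kap) \<le> integral {0..a} (\<lambda>_. 1::real)"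
      using weibull_survival_integrable[OF lam kap(1)] weibull_survival_le_1[OF lam]
      by (intro integral_le) auto
    also have "\<dots> \<le> e"
      using a by simp
    also have "integral {a..R} (weibull_survival lam kap) \<le> lam * Gamma (1 + 1/kap)"
      by (rule integral_weibull_survival_le_away_from_0[OF lam kap a(1,2)])
    finally show ?thesis
      by simp
  qed
qed

lemma weibull_G_eq: "weibull_G lam kap t = integral {0..t} (weibull_survival lam kap) / (lam * Gamma (1 + 1/kap))"
  by (simp add: weibull_G_def weibull_survival_def[abs_def])

lemma weibull_G_le:
  assumes lam: "lam > 0" and kap: "0 < kap" "kap \<le> 1" and t: "t \<ge> 0"
  shows "weibull_G lam kap t \<le> 1 - weibull_survival lam kap t"
proof -
  let ?mu = "lam * Gamma (1 + 1/kap)"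
  let ?S = "weibull_survival lam kap"
  let ?L = "\<lambda>R. integral {0..R} ?S"
  define L_inf where "L_inf = (SUP R\<in>{0..}. ?L R)"
  have bdd: "bdd_above (?L ` {0..})"
    using integral_weibull_survival_le[OF lam kap] by (auto intro!: bdd_aboveI)
  \<comment> \<open>S (t + y) \<ge> S t * S y, so L_inf \<ge> L t + S t * L_inf, i.e. L t \<le> (1 - S t) * L_inf\<close>
  have "?L t + ?S t * ?L R \<le> L_inf" if R: "R \<ge> 0" for R
  proof -
    have "?L (t+R) = ?L t + integral {t..t+R} ?S"
      using t R weibull_survival_integrable[OF lam kap(1), of 0 "t+R"]
      by (simp add: Henstock_Kurzweil_Integration.integral_combine)
    also have "integral {t..t+R} ?S = integral {0..R} (\<lambda>y. ?S (y + t))"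
      using integral_shift_real_ivl[where a=t and c=t and b="t+R" and f="?S"] by simp
    also have "integral {0..R} (\<lambda>y. ?S (y + t)) \<ge> integral {0..R} (\<lambda>y. ?S t * ?S y)"
    proof (rule integral_le)
      show "(\<lambda>y. ?S t * ?S y) integrable_on {0..R}"
        using integrable_on_cmult_left[OF weibull_survival_integrable[OF lam kap(1) order_refl], of "?S t"]
        by simp
      show "(\<lambda>y. ?S (y + t)) integrable_on {0..R}"
        using integrable_shift_real_ivl[OF weibull_survival_integrable[OF lam kap(1), of t "t+R"], of t] t
        by simp
    qed (use weibull_survival_mult_le[OF lam kap t] in \<open>simp add: add.commute\<close>)
    moreover have "?L (t+R) \<le> L_inf"
      unfolding L_inf_def by (rule cSUP_upper[OF _ bdd]) (use t R in auto)
    ultimately show ?thesis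
      by simp
  qed
  then have "L_inf \<le> (L_inf - ?L t) / ?S t"
    unfolding L_inf_def using weibull_survival_pos[of lam kap t]
    by (intro cSUP_least) (auto simp: field_simps)
  then have "?L t \<le> L_inf * (1 - ?S t)"
    using weibull_survival_pos[of lam kap t] by (simp add: field_simps)
  also have "\<dots> \<le> ?mu * (1 - ?S t)"
    unfolding L_inf_def using integral_weibull_survival_le[OF lam kap] weibull_survival_le_1[OF lam t]
    by (intro mult_right_mono cSUP_least) auto
  finally show ?thesis
    using lam kap Gamma_one_plus_inverse_pos[of kap] by (simp add: weibull_G_eq divide_le_eq mult.commute)
qed

lemma weibull_G_mono:
  assumes lam: "lam > 0" and kap: "0 < kap" and t: "0 \<le> t" "t \<le> t'"
  shows "weibull_G lam kap t \<le> weibull_G lam kap t'"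
proof -
  have "integral {0..t} (weibull_survival lam kap) \<le> integral {0..t'} (weibull_survival lam kap)"
    using t weibull_survival_integrable[OF lam kap] weibull_survival_pos[of lam kap]
    by (intro integral_subset_le) (auto intro: less_imp_le)
  then show ?thesis
    using lam kap Gamma_one_plus_inverse_pos[of kap] by (simp add: weibull_G_eq divide_right_mono)
qed

lemma weibull_G_le_exp:
  assumes "lam > 0" "0 < kap" "kap \<le> 1" "0 \<le> t" "t \<le> t'"
  shows "weibull_G lam kap t \<le> 1 - exp (- ((t'/lam) powr kap))"
  using weibull_G_mono[of lam kap t t'] weibull_G_le[of lam kap t'] assms
  by (simp add: weibull_survival_def)

section \<open>The approximation error on a damaged index set\<close>

lemma has_sum_norm_le:
  fixes f :: "'a \<Rightarrow> 'v::real_normed_vector"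
  assumes "(f has_sum S) A" "\<And>F. finite F \<Longrightarrow> F \<subseteq> A \<Longrightarrow> norm (sum f F) \<le> B"
  shows "norm S \<le> B"
proof -
  have "((\<lambda>F. norm (sum f F)) \<longlongrightarrow> norm S) (finite_subsets_at_top A)"
    using assms(1) unfolding has_sum_def by (rule tendsto_norm)
  moreover have "eventually (\<lambda>F. norm (sum f F) \<le> B) (finite_subsets_at_top A)"
    using assms(2) by (intro eventually_finite_subsets_at_top_weakI) auto
  ultimately show ?thesis
    by (rule tendsto_upperbound) simp
qed

lemma downset_between_levels:
  fixes I :: "('d::finite \<Rightarrow> nat) set"
  assumes "{i. norm1 i < n} \<subseteq> I" "I \<subseteq> {i. norm1 i \<le> n}"
  shows "downset I = I"
proof
  show "downset I \<subseteq> I"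
  proof
    fix i assume "i \<in> downset I"
    then obtain j where "j \<in> I" "i \<le> j"
      by (auto simp: downset_def)
    show "i \<in> I"
    proof (cases "i = j")
      case False
      with \<open>i \<le> j\<close> have "norm1 i < norm1 j"
        by (intro norm1_strict_mono) simp
      moreover have "norm1 j \<le> n"
        using \<open>j \<in> I\<close> assms(2) by blast
      ultimately show ?thesis
        using assms(1) by auto
    qed (use \<open>j \<in> I\<close> in simp)
  qed
qed (auto simp: downset_def)

lemma norm_u_gcp_error_le:
  fixes uu :: "('d::finite \<Rightarrow> nat) \<Rightarrow> 'v::real_normed_vector"
  assumes expansion: "(surplus uu has_sum u) UNIV"
    and bound: "\<And>j. norm (surplus uu j) \<le> C * (1/4)^norm1 j"
    and I: "{i. norm1 i < n} \<subseteq> I" "I \<subseteq> {i. norm1 i \<le> n}"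
  shows "norm (u - u_gcp uu I)
           \<le> C * (binomial_tail CARD('d) n + (1/4)^n * card ({i. norm1 i = n} - I))"
proof -
  have "0 \<le> C * (1/4)^norm1 (\<lambda>_::'d. 0::nat)"
    by (rule order.trans[OF norm_ge_zero bound])
  then have "0 \<le> C"
    by (simp add: norm1_def)
  have "finite I"
    using I(2) finite_norm1_le by (rule finite_subset)
  then have "u_gcp uu I = (\<Sum>j\<in>I. surplus uu j)"
    using downset_between_levels[OF I] by (rule u_gcp_downset)
  moreover have "(surplus uu has_sum (u - (\<Sum>j\<in>I. surplus uu j))) (UNIV - I)"
    using \<open>finite I\<close> by (intro has_sum_Diff expansion has_sum_finite) auto
  ultimately have "(surplus uu has_sum (u - u_gcp uu I)) (UNIV - I)"
    by simp
  then show ?thesis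
  proof (rule has_sum_norm_le)
    fix F assume F: "finite F" "F \<subseteq> UNIV - I"
    define above where "above = F \<inter> {j. n < norm1 j}"
    have lost: "F - above \<subseteq> {i. norm1 i = n} - I"
    proof
      fix j assume "j \<in> F - above"
      with F have "j \<notin> I" "\<not> n < norm1 j"
        by (auto simp: above_def)
      with I(1) show "j \<in> {i. norm1 i = n} - I"
        by (cases "norm1 j < n") auto
    qed
    have "(\<Sum>j\<in>F - above. (1/4::real)^norm1 j) = (\<Sum>j\<in>F - above. (1/4)^n)"
      using lost by (intro sum.cong) auto
    also have "\<dots> \<le> (1/4)^n * card ({i. norm1 i = n} - I)"
      using card_mono[OF _ lost] finite_norm1_eq by auto
    finally have "(\<Sum>j\<in>F - above. (1/4::real)^norm1 j) \<le> (1/4)^n * card ({i. norm1 i = n} - I)" .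
    moreover have "(\<Sum>j\<in>above. (1/4::real)^norm1 j) \<le> binomial_tail CARD('d) n"
      using F(1) by (intro sum_norm1_gt_le_binomial_tail) (auto simp: above_def)
    moreover have "(\<Sum>j\<in>F. (1/4::real)^norm1 j) = (\<Sum>j\<in>above. (1/4)^norm1 j) + (\<Sum>j\<in>F - above. (1/4)^norm1 j)"
      using sum.Int_Diff[OF F(1), of _ "{j. n < norm1 j}"] by (simp add: above_def Diff_Int)
    ultimately have "(\<Sum>j\<in>F. (1/4::real)^norm1 j) \<le> binomial_tail CARD('d) n + (1/4)^n * card ({i. norm1 i = n} - I)"
      by linarith
    then have "C * (\<Sum>j\<in>F. (1/4)^norm1 j) \<le> C * (binomial_tail CARD('d) n + (1/4)^n * card ({i. norm1 i = n} - I))"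
      using \<open>0 \<le> C\<close> by (rule mult_left_mono)
    moreover have "norm (sum (surplus uu) F) \<le> C * (\<Sum>j\<in>F. (1/4)^norm1 j)"
      unfolding sum_distrib_left using bound by (intro order.trans[OF norm_sum] sum_mono)
    ultimately show "norm (sum (surplus uu) F) \<le> C * (binomial_tail CARD('d) n + (1/4)^n * card ({i. norm1 i = n} - I))"
      by linarith
  qed
qed

lemma AE_norm_u_gcp_error_le:
  fixes uu :: "('d::finite \<Rightarrow> nat) \<Rightarrow> 'v::real_normed_vector" and U :: "('d \<Rightarrow> nat) \<Rightarrow> 'w \<Rightarrow> nat"
  assumes expansion: "(surplus uu has_sum u) UNIV"
    and bound: "\<And>j. norm (surplus uu j) \<le> C * (1/4)^norm1 j"
    and U_vals: "\<And>i \<omega>. norm1 i \<le> n \<Longrightarrow> \<omega> \<in> space M \<Longrightarrow> U i \<omega> \<in> {0, 1}"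
    and U_low: "\<And>i. norm1 i < n \<Longrightarrow> (AE \<omega> in M. U i \<omega> = 0)"
  shows "AE \<omega> in M. norm (u - u_gcp uu {i. norm1 i \<le> n \<and> U i \<omega> = 0})
           \<le> C * (binomial_tail CARD('d) n + (1/4)^n * card {i. norm1 i = n \<and> U i \<omega> = 1})"
proof -
  have "finite {i::'d \<Rightarrow> nat. norm1 i < n}"
    by (rule finite_subset[OF _ finite_norm1_le[of n]]) auto
  then have "AE \<omega> in M. \<forall>i\<in>{i. norm1 i < n}. U i \<omega> = 0"
    using U_low by (rule AE_finite_allI) simp
  then show ?thesis
  proof (rule AE_mp, intro AE_I2 impI)
    fix \<omega> assume "\<omega> \<in> space M" and low: "\<forall>i\<in>{i. norm1 i < n}. U i \<omega> = 0"
    have "norm (u - u_gcp uu {i. norm1 i \<le> n \<and> U i \<omega> = 0})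
        \<le> C * (binomial_tail CARD('d) n + (1/4)^n * card ({i. norm1 i = n} - {i. norm1 i \<le> n \<and> U i \<omega> = 0}))"
      using low by (intro norm_u_gcp_error_le[OF expansion bound]) auto
    moreover have "U i \<omega> = 1 \<longleftrightarrow> U i \<omega> \<noteq> 0" if "norm1 i = n" for i
      using U_vals[of i \<omega>] that \<open>\<omega> \<in> space M\<close> by auto
    then have "{i. norm1 i = n} - {i. norm1 i \<le> n \<and> U i \<omega> = 0} = {i. norm1 i = n \<and> U i \<omega> = 1}"
      by auto
    ultimately show "norm (u - u_gcp uu {i. norm1 i \<le> n \<and> U i \<omega> = 0})
           \<le> C * (binomial_tail CARD('d) n + (1/4)^n * card {i. norm1 i = n \<and> U i \<omega> = 1})"
      by simp
  qed
qed

section \<open>Random index sets\<close>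

lemma measurable_random_subset:
  assumes "finite I" "\<And>i. i \<in> I \<Longrightarrow> {\<omega> \<in> space M. P i \<omega>} \<in> sets M"
  shows "(\<lambda>\<omega>. {i\<in>I. P i \<omega>}) \<in> measurable M (count_space (Pow I))"
  unfolding measurable_count_space_eq2[OF finite_Pow_iff[THEN iffD2, OF assms(1)]]
proof (intro conjI ballI)
  fix J assume "J \<in> Pow I"
  then have "(\<lambda>\<omega>. {i\<in>I. P i \<omega>}) -` {J} \<inter> space M = {\<omega> \<in> space M. \<forall>i\<in>I. P i \<omega> \<longleftrightarrow> i \<in> J}"
    by blast
  also have "\<dots> \<in> sets M"
    using assms by (intro sets.sets_Collect_finite_All) (auto intro: sets.sets_Collect_neg)
  finally show "(\<lambda>\<omega>. {i\<in>I. P i \<omega>}) -` {J} \<inter> space M \<in> sets M" .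
qed auto

lemma (in finite_measure) integrable_random_subset:
  fixes f :: "'i set \<Rightarrow> real"
  assumes "finite I" "\<And>i. i \<in> I \<Longrightarrow> {\<omega> \<in> space M. P i \<omega>} \<in> sets M"
  shows "integrable M (\<lambda>\<omega>. f {i\<in>I. P i \<omega>})"
proof (rule integrable_const_bound)
  show "AE \<omega> in M. norm (f {i\<in>I. P i \<omega>}) \<le> Max ((\<lambda>J. \<bar>f J\<bar>) ` Pow I)"
    using assms(1) by (intro AE_I2 Max_ge) auto
  show "(\<lambda>\<omega>. f {i\<in>I. P i \<omega>}) \<in> borel_measurable M"
    using measurable_random_subset[OF assms] borel_measurable_count_space by (rule measurable_compose)
qed

lemma (in finite_measure) has_bochner_integral_card_events:
  assumes "finite I" "\<And>i. i \<in> I \<Longrightarrow> {\<omega> \<in> space M. P i \<omega>} \<in> sets M"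
  shows "has_bochner_integral M (\<lambda>\<omega>. real (card {i\<in>I. P i \<omega>})) (\<Sum>i\<in>I. measure M {\<omega> \<in> space M. P i \<omega>})"
proof -
  have "has_bochner_integral M (\<lambda>\<omega>. \<Sum>i\<in>I. indicator {\<omega> \<in> space M. P i \<omega>} \<omega>)
          (\<Sum>i\<in>I. measure M {\<omega> \<in> space M. P i \<omega>})"
    using assms(2) by (intro has_bochner_integral_sum has_bochner_integral_real_indicator) (auto simp flip: less_top)
  moreover have "(\<Sum>i\<in>I. indicator {\<omega> \<in> space M. P i \<omega>} \<omega>) = real (card {i\<in>I. P i \<omega>})"
    if "\<omega> \<in> space M" for \<omega>
    using that assms(1) by (simp add: indicator_def sum.If_cases Int_def)
  ultimately show ?thesis
    by (simp cong: has_bochner_integral_cong)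
qed

lemma (in prob_space) integral_le_of_AE_le_card_events:
  fixes f :: "'a \<Rightarrow> real" and a b p :: real
  assumes f: "integrable M f" "AE \<omega> in M. f \<omega> \<le> a + b * card {i\<in>I. P i \<omega>}"
    and events: "finite I" "\<And>i. i \<in> I \<Longrightarrow> {\<omega> \<in> space M. P i \<omega>} \<in> sets M"
    and prob_le: "\<And>i. i \<in> I \<Longrightarrow> prob {\<omega> \<in> space M. P i \<omega>} \<le> p"
    and "0 \<le> b"
  shows "integral\<^sup>L M f \<le> a + b * (card I * p)"
proof -
  have "has_bochner_integral M (\<lambda>\<omega>. a + b * card {i\<in>I. P i \<omega>}) (a + b * (\<Sum>i\<in>I. prob {\<omega> \<in> space M. P i \<omega>}))"
    using has_bochner_integral_card_events[OF events(1)] events(2)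
    by (intro has_bochner_integral_add has_bochner_integral_mult_right)
       (auto simp: has_bochner_integral_iff prob_space)
  then have "integral\<^sup>L M f \<le> a + b * (\<Sum>i\<in>I. prob {\<omega> \<in> space M. P i \<omega>})"
    using integral_mono_AE[OF f(1) _ f(2)] by (simp add: has_bochner_integral_iff)
  also have "\<dots> \<le> a + b * (card I * p)"
    using sum_bounded_above[of I _ p] prob_le \<open>0 \<le> b\<close> by (simp add: mult_left_mono)
  finally show ?thesis .
qed

theorem proposition3p2:
  fixes M :: "'w measure"
    and u :: "'v::banach"
    and uu :: "('d::finite \<Rightarrow> nat) \<Rightarrow> 'v"
    and s :: real
    and n :: nat
    and lam kap tn :: real
    and t :: "('d \<Rightarrow> nat) \<Rightarrow> real"
    and U :: "('d \<Rightarrow> nat) \<Rightarrow> 'w \<Rightarrow> nat"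
  assumes n_pos: "n \<ge> 1"
    and lam_pos: "lam > 0"
    and kap: "0 < kap" "kap \<le> 1"
    and s_nonneg: "0 \<le> s"
    and expansion: "(surplus uu has_sum u) UNIV"
    and surplus_bound: "\<And>j. norm (surplus uu j) \<le> (1/3) ^ CARD('d) * (1/4) ^ norm1 j * s"
    and tn: "0 \<le> tn"
    and t_range: "\<And>i. norm1 i = n \<Longrightarrow> 0 \<le> t i \<and> t i \<le> tn"
    and prob: "prob_space M"
    and U_meas: "\<And>i. norm1 i \<le> n \<Longrightarrow> U i \<in> measurable M (count_space UNIV)"
    and U_vals: "\<And>i \<omega>. norm1 i \<le> n \<Longrightarrow> \<omega> \<in> space M \<Longrightarrow> U i \<omega> \<in> {0, 1}"
    and U_low: "\<And>i. norm1 i < n \<Longrightarrow> (AE \<omega> in M. U i \<omega> = 0)"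
    and U_top: "\<And>i. norm1 i = n \<Longrightarrow> measure M {\<omega> \<in> space M. U i \<omega> = 1} = weibull_G lam kap (t i)"
  shows "integrable M (\<lambda>\<omega>. norm (u - u_gcp uu {i. norm1 i \<le> n \<and> U i \<omega> = 0}))
     \<and> (\<integral>\<omega>. norm (u - u_gcp uu {i. norm1 i \<le> n \<and> U i \<omega> = 0}) \<partial>M)
        \<le> eps_n CARD('d) n s * (1 + 3 * (1 - exp (- ((tn / lam) powr kap))))"
proof -
  interpret prob_space M
    by (rule prob)
  define C where "C = (1/3::real)^CARD('d) * s"
  define F where "F = 1 - exp (- ((tn / lam) powr kap))"
  have events: "{\<omega> \<in> space M. U i \<omega> = c} \<in> sets M" if "norm1 i \<le> n" for i c
    using pred_count_space_const1[OF U_meas[OF that]] by (simp add: pred_def)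
  have error_integrable: "integrable M (\<lambda>\<omega>. norm (u - u_gcp uu {i. norm1 i \<le> n \<and> U i \<omega> = 0}))"
    using integrable_random_subset[where f = "\<lambda>J. norm (u - u_gcp uu J)" and P = "\<lambda>i \<omega>. U i \<omega> = 0",
                                   OF finite_norm1_le events]
    by simp
  have "AE \<omega> in M. norm (u - u_gcp uu {i. norm1 i \<le> n \<and> U i \<omega> = 0})
          \<le> C * binomial_tail CARD('d) n + C * (1/4)^n * card {i \<in> {i. norm1 i = n}. U i \<omega> = 1}"
    using AE_norm_u_gcp_error_le[where U = U and M = M and C = C, OF expansion _ U_vals U_low] surplus_bound
    by (simp add: C_def algebra_simps)
  then have "(\<integral>\<omega>. norm (u - u_gcp uu {i. norm1 i \<le> n \<and> U i \<omega> = 0}) \<partial>M)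
      \<le> C * binomial_tail CARD('d) n + C * (1/4)^n * (card {i::'d \<Rightarrow> nat. norm1 i = n} * F)"
    using error_integrable finite_norm1_eq events U_top t_range weibull_G_le_exp[OF lam_pos kap]
    by (intro integral_le_of_AE_le_card_events) (auto simp: C_def F_def s_nonneg)
  also have "\<dots> \<le> C * binomial_tail CARD('d) n * (1 + 3 * F)"
  proof -
    have "0 \<le> C" "0 \<le> F"
      using s_nonneg by (simp_all add: C_def F_def)
    then have "C * ((1/4)^n * card {i::'d \<Rightarrow> nat. norm1 i = n} * F) \<le> C * (3 * binomial_tail CARD('d) n * F)"
      by (intro mult_left_mono mult_right_mono card_level_le_binomial_tail)
    then show ?thesis
      by (simp add: algebra_simps)
  qed
  finally show ?thesis
    using error_integrable by (simp add: eps_n_eq_binomial_tail C_def F_def mult_ac)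
qed

end
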